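(* Let $(X,\mathcal{A})$ be a cross resolvable design with $|X|=v$ points, blocks of size $k$, and $r$ parallel classes. Let $i\in\{3,4,\dots,r\}$ be such that the $i$-th cross intersection number $\mu_i$ exists. Then for any $i-1$ blocks drawn from $i-1$ distinct parallel classes, the cardinality of their intersection equals $\mu_i\frac{v}{k}$; that is, $\mu_{i-1}=\mu_i\frac{v}{k}$.
   Context: A design is a pair $(X,\mathcal{A})$ where $X$ is a finite set of points and $\mathcal{A}$ is a collection of nonempty subsets of $X$ (blocks), all of the same size $k$. A parallel class is a subset of $\mathcal{A}$ consisting of pairwise disjoint blocks whose union is $X$. The design is resolvable if $\mathcal{A}$ can be partitioned into parallel classes; fix such a partition into $r$ parallel classes (each then contains exactly $v/k$ blocks). For $i\in\{2,\dots,r\}$, the $i$-th cross intersection number $\mu_i$ is said to exist if the cardinality $|B_1\cap\cdots\cap B_i|$ takes the same nonzero value for every choice of blocks $B_1,\dots,B_i$ taken from $i$ distinct parallel classes; $\mu_i$ is this common value. A resolvable design is a cross resolvable design (CRD) if $\mu_i$ exists for at least one $i\in\{2,\dots,r\}$. *)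

theory Defs
  imports Complex_Main
begin

definition parallel_class :: "'a set \<Rightarrow> nat \<Rightarrow> 'a set set \<Rightarrow> bool" where
  "parallel_class X k C \<longleftrightarrow>
     (\<forall>B\<in>C. B \<subseteq> X \<and> B \<noteq> {} \<and> card B = k) \<and>
     (\<forall>B1\<in>C. \<forall>B2\<in>C. B1 \<noteq> B2 \<longrightarrow> B1 \<inter> B2 = {}) \<and>
     \<Union>C = X"

text \<open>A resolvable design with point set X, block size k, and a fixed resolution
  into r parallel classes P 0, ..., P (r-1); the block collection is the
  (multiset) union of these classes.\<close>
definition resolvable_design :: "'a set \<Rightarrow> nat \<Rightarrow> nat \<Rightarrow> (nat \<Rightarrow> 'a set set) \<Rightarrow> bool" where
  "resolvable_design X k r P \<longleftrightarrow> finite X \<and> (\<forall>j<r. parallel_class X k (P j))"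

definition cross_intersection_number ::
  "(nat \<Rightarrow> 'a set set) \<Rightarrow> nat \<Rightarrow> nat \<Rightarrow> nat \<Rightarrow> bool" where
  "cross_intersection_number P r i mu \<longleftrightarrow> mu \<noteq> 0 \<and>
     (\<forall>J B. inj_on J {..<i} \<and> J ` {..<i} \<subseteq> {..<r} \<and> (\<forall>t<i. B t \<in> P (J t))
        \<longrightarrow> card (\<Inter>t<i. B t) = mu)"

definition cross_resolvable_design :: "'a set \<Rightarrow> nat \<Rightarrow> nat \<Rightarrow> (nat \<Rightarrow> 'a set set) \<Rightarrow> bool" where
  "cross_resolvable_design X k r P \<longleftrightarrow> resolvable_design X k r P \<and>
     (\<exists>i\<in>{2..r}. \<exists>mu. cross_intersection_number P r i mu)"

end

theory Submission
  imports Defs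
begin

text \<open>Fix blocks from \<open>i - 1\<close> distinct classes and let \<open>I\<close> be their intersection. Since
  \<open>i - 1 < r\<close>, some class \<open>P j\<close> is unused; its blocks partition \<open>X\<close>, so they partition \<open>I\<close>
  into pieces \<open>I \<inter> C\<close>, each of which is an intersection of \<open>i\<close> blocks from distinct
  classes and therefore has \<open>\<mu>\<^sub>i\<close> points. Hence \<open>|I| = |P j| \<mu>\<^sub>i\<close>, while counting \<open>X\<close>
  itself the same way gives \<open>v = |P j| k\<close>.\<close>

lemma parallel_class_finite:
  assumes "finite X" "parallel_class X k C"
  shows "finite C"
proof (rule finite_subset)
  show "C \<subseteq> Pow X"
    using assms(2) unfolding parallel_class_def by blast
  show "finite (Pow X)"
    using assms(1) by simp
qed

lemma parallel_class_block_size_pos: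
  assumes "finite X" "parallel_class X k C" "B \<in> C"
  shows "0 < k"
  using assms finite_subset card_gt_0_iff unfolding parallel_class_def by metis

lemma card_eq_card_parallel_class_mult:
  assumes "finite X" "parallel_class X k C" "S \<subseteq> X"
    and "\<And>B. B \<in> C \<Longrightarrow> card (S \<inter> B) = m"
  shows "card S = card C * m"
proof -
  have disjoint: "\<forall>B1\<in>C. \<forall>B2\<in>C. B1 \<noteq> B2 \<longrightarrow> B1 \<inter> B2 = {}" and cover: "\<Union>C = X"
    using assms(2) unfolding parallel_class_def by simp_all
  have "S = (\<Union>B\<in>C. S \<inter> B)"
    using assms(3) cover by blast
  also have "card \<dots> = (\<Sum>B\<in>C. card (S \<inter> B))"
  proof (rule card_UN_disjoint)
    show "finite C"
      using assms(1,2) by (rule parallel_class_finite)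
    show "\<forall>B\<in>C. finite (S \<inter> B)"
      using assms(1,3) finite_subset by blast
    show "\<forall>B1\<in>C. \<forall>B2\<in>C. B1 \<noteq> B2 \<longrightarrow> (S \<inter> B1) \<inter> (S \<inter> B2) = {}"
      using disjoint by blast
  qed
  also have "\<dots> = card C * m"
    using assms(4) by simp
  finally show ?thesis .
qed

lemma card_eq_card_parallel_class_mult_block_size:
  assumes "finite X" "parallel_class X k C"
  shows "card X = card C * k"
proof (rule card_eq_card_parallel_class_mult[OF assms order_refl])
  show "card (X \<inter> B) = k" if "B \<in> C" for B
    using assms(2) that unfolding parallel_class_def by (simp add: Int_absorb1)
qed

lemma exists_unused_class:
  fixes J :: "nat \<Rightarrow> nat"
  assumes "inj_on J {..<n}" "J ` {..<n} \<subseteq> {..<r}" "n < r"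
  obtains j where "j < r" "j \<notin> J ` {..<n}"
proof -
  have "card (J ` {..<n}) = n"
    using assms(1) by (simp add: card_image)
  then have "J ` {..<n} \<noteq> {..<r}"
    using assms(3) by auto
  then show ?thesis
    using assms(2) that by auto
qed

lemma card_Inter_Int_block_unused_class:
  assumes "cross_intersection_number P r (Suc n) mu"
    and "inj_on J {..<n}" "J ` {..<n} \<subseteq> {..<r}" "\<forall>t<n. B t \<in> P (J t)"
    and "j < r" "j \<notin> J ` {..<n}" "C \<in> P j"
  shows "card ((\<Inter>t<n. B t) \<inter> C) = mu"
proof -
  have "inj_on (J(n := j)) {..<Suc n}"
    using assms(2,6) by (auto simp: lessThan_Suc inj_on_def)
  moreover have "J(n := j) ` {..<Suc n} \<subseteq> {..<r}"
    using assms(3,5) by (auto simp: lessThan_Suc)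
  moreover have "\<forall>t<Suc n. (B(n := C)) t \<in> P ((J(n := j)) t)"
    using assms(4,7) by (simp add: less_Suc_eq)
  ultimately have "card (\<Inter>t<Suc n. (B(n := C)) t) = mu"
    using assms(1) unfolding cross_intersection_number_def by blast
  moreover have "(\<Inter>t<Suc n. (B(n := C)) t) = (\<Inter>t<n. B t) \<inter> C"
    by (auto simp: lessThan_Suc)
  ultimately show ?thesis
    by simp
qed

lemma card_Inter_blocks_mult_block_size:
  assumes "resolvable_design X k r P" "cross_intersection_number P r (Suc n) mu"
    and "0 < n" "n < r"
    and "inj_on J {..<n}" "J ` {..<n} \<subseteq> {..<r}" "\<forall>t<n. B t \<in> P (J t)"
  shows "card (\<Inter>t<n. B t) * k = mu * card X"
proof -
  have fin: "finite X" and pc: "\<And>j. j < r \<Longrightarrow> parallel_class X k (P j)"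
    using assms(1) unfolding resolvable_design_def by auto
  obtain j where j: "j < r" "j \<notin> J ` {..<n}"
    using exists_unused_class assms(4-6) by blast
  have "J 0 < r" "B 0 \<in> P (J 0)"
    using assms(3,6,7) by auto
  then have "B 0 \<subseteq> X"
    using pc unfolding parallel_class_def by blast
  then have "(\<Inter>t<n. B t) \<subseteq> X"
    using assms(3) by auto
  then have "card (\<Inter>t<n. B t) = card (P j) * mu"
    using card_Inter_Int_block_unused_class[OF assms(2,5-7) j]
    by (intro card_eq_card_parallel_class_mult[OF fin pc[OF j(1)]])
  moreover have "card X = card (P j) * k"
    using card_eq_card_parallel_class_mult_block_size[OF fin pc[OF j(1)]] .
  ultimately show ?thesis
    by simp
qed

theorem lemma1:
  fixes X :: "'a set" and P :: "nat \<Rightarrow> 'a set set" and v k r i mu :: nat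
  assumes "cross_resolvable_design X k r P"
    and "card X = v"
    and "i \<in> {3..r}"
    and "cross_intersection_number P r i mu"
  shows "\<forall>J B. inj_on J {..<i-1} \<and> J ` {..<i-1} \<subseteq> {..<r} \<and> (\<forall>t<i-1. B t \<in> P (J t))
           \<longrightarrow> real (card (\<Inter>t<i-1. B t)) = real mu * real v / real k"
proof (intro allI impI)
  fix J B
  assume blocks: "inj_on J {..<i-1} \<and> J ` {..<i-1} \<subseteq> {..<r} \<and> (\<forall>t<i-1. B t \<in> P (J t))"
  have design: "resolvable_design X k r P"
    using assms(1) unfolding cross_resolvable_design_def by simp
  have i: "Suc (i - 1) = i" "0 < i - 1" "i - 1 < r"
    using assms(3) by auto
  have "cross_intersection_number P r (Suc (i - 1)) mu"
    using assms(4) i(1) by simp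
  then have "real (card (\<Inter>t<i-1. B t)) * real k = real mu * real v"
    using card_Inter_blocks_mult_block_size[OF design _ i(2,3)] assms(2) blocks of_nat_mult
    by metis
  moreover have "J 0 < r" "B 0 \<in> P (J 0)"
    using blocks i(2) by (auto simp: image_subset_iff)
  then have "0 < k"
    using design parallel_class_block_size_pos unfolding resolvable_design_def by blast
  ultimately show "real (card (\<Inter>t<i-1. B t)) = real mu * real v / real k"
    by (simp add: eq_divide_eq)
qed

end
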